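(* Let $a, b$ be integers with $0 < a \le b$ and let $L_{a,b} = \{C_{i,1} : 1 \le i \le a+1\} \cup \{C_{1,j} : 1 < j \le b+1\}$, of size $n = a+b+1$. Then on the $n \times n$ board, $\mathrm{cp}_{\mathrm{free}}(L_{a,b}) \ge 2$.
   Context: For integers $i,j$, $C_{i,j}$ denotes the unit square cell in column $i$ and row $j$ of the integer grid (columns numbered left to right, rows numbered top to bottom). A polyomino is a finite set of cells; its size is its number of cells. For a polyomino $\mathcal{P}$ of size $n$ the board is $\mathbb{B} = \{C_{i,j} : 1 \le i,j \le n\}$. The shift of $\mathcal{P}$ by integers $(c,d)$ is $\mathcal{P}+(c,d) = \{C_{x+c,y+d} : C_{x,y} \in \mathcal{P}\}$. The rotations of $L_{a,b}$ by $90^\circ, 180^\circ, 270^\circ$ clockwise are $LR_{a,b} = \{C_{i,1} : 1 \le i \le b+1\} \cup \{C_{b+1,j} : 1 \le j \le a+1\}$, $LR^2_{a,b} = \{C_{i,b+1} : 1 \le i \le a+1\} \cup \{C_{a+1,j} : 1 \le j \le b+1\}$, $LR^3_{a,b} = \{C_{i,a+1} : 1 \le i \le b+1\} \cup \{C_{1,j} : 1 \le j \le a+1\}$ (reflections are not allowed). A free copy of $L_{a,b}$ is any shift of $L_{a,b}$, $LR_{a,b}$, $LR^2_{a,b}$ or $LR^3_{a,b}$. A set of polyominoes is a valid arrangement if each is contained in $\mathbb{B}$ and they are pairwise disjoint. A free packing of $\mathcal{P}$ is a set of free copies of $\mathcal{P}$ forming a valid arrangement such that adding any further free copy of $\mathcal{P}$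 yields an invalid arrangement. The clumsy free packing number $\mathrm{cp}_{\mathrm{free}}(\mathcal{P})$ is the minimum number of polyominoes in a free packing of $\mathcal{P}$ on the $n \times n$ board. *)

theory Defs
  imports Main
begin

text \<open>A cell C_{i,j} is the pair (i,j) :: int \<times> int (column i, row j).\<close>
type_synonym cell = "int \<times> int"

definition L :: "int \<Rightarrow> int \<Rightarrow> cell set" where
  "L a b = {(i,1) | i. 1 \<le> i \<and> i \<le> a+1} \<union> {(1,j) | j. 1 < j \<and> j \<le> b+1}"

definition LR :: "int \<Rightarrow> int \<Rightarrow> cell set" where
  "LR a b = {(i,1) | i. 1 \<le> i \<and> i \<le> b+1} \<union> {(b+1,j) | j. 1 \<le> j \<and> j \<le> a+1}"

definition LR2 :: "int \<Rightarrow> int \<Rightarrow> cell set" where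
  "LR2 a b = {(i,b+1) | i. 1 \<le> i \<and> i \<le> a+1} \<union> {(a+1,j) | j. 1 \<le> j \<and> j \<le> b+1}"

definition LR3 :: "int \<Rightarrow> int \<Rightarrow> cell set" where
  "LR3 a b = {(i,a+1) | i. 1 \<le> i \<and> i \<le> b+1} \<union> {(1,j) | j. 1 \<le> j \<and> j \<le> a+1}"

definition shift :: "cell set \<Rightarrow> int \<Rightarrow> int \<Rightarrow> cell set" where
  "shift P c d = {(x+c, y+d) | x y. (x,y) \<in> P}"

definition board :: "int \<Rightarrow> cell set" where
  "board n = {(i,j) | i j. 1 \<le> i \<and> i \<le> n \<and> 1 \<le> j \<and> j \<le> n}"

definition free_copy :: "int \<Rightarrow> int \<Rightarrow> cell set \<Rightarrow> bool" where
  "free_copy a b Q \<longleftrightarrow> (\<exists>c d. Q = shift (L a b) c d \<or> Q = shift (LR a b) c d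
      \<or> Q = shift (LR2 a b) c d \<or> Q = shift (LR3 a b) c d)"

definition valid_arrangement :: "int \<Rightarrow> cell set set \<Rightarrow> bool" where
  "valid_arrangement n S \<longleftrightarrow> (\<forall>P\<in>S. P \<subseteq> board n) \<and>
      (\<forall>P\<in>S. \<forall>Q\<in>S. P \<noteq> Q \<longrightarrow> P \<inter> Q = {})"

definition free_packing :: "int \<Rightarrow> int \<Rightarrow> cell set set \<Rightarrow> bool" where
  "free_packing a b S \<longleftrightarrow> (\<forall>Q\<in>S. free_copy a b Q) \<and> valid_arrangement (a+b+1) S \<and>
      (\<forall>Q. free_copy a b Q \<and> Q \<notin> S \<longrightarrow> \<not> valid_arrangement (a+b+1) (insert Q S))"

definition cp_free :: "int \<Rightarrow> int \<Rightarrow> nat" where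
  "cp_free a b = (LEAST k. \<exists>S. free_packing a b S \<and> card S = k)"

end

theory Submission
  imports Defs
begin

text \<open>A packing exists (take a maximal valid arrangement), and none has fewer than two copies:
the empty arrangement is not maximal, and neither is a single copy, because every copy inside the
board leaves room for a disjoint one. A copy of L can be shifted by (1, 1) or (-1, -1), and a copy
of LR by (-1, 1) or (1, -1), staying disjoint from itself and inside the board unless it is wedged
into a corner of the board; there a copy of another orientation fits along the two opposite sides.
The half-turn of the board maps copies of LR2 and LR3 to copies of L and LR.\<close>

lemma mem_shift_iff: "(x, y) \<in> shift P c d \<longleftrightarrow> (x - c, y - d) \<in> P"
  unfolding shift_def by force

lemma mem_shift_L_iff:
  "(x, y) \<in> shift (L a b) c d \<longleftrightarrow>
     y = d + 1 \<and> c + 1 \<le> x \<and> x \<le> c + a + 1 \<or> x = c + 1 \<and> d + 1 < y \<and> y \<le> d + b + 1"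
  unfolding mem_shift_iff L_def by auto

lemma mem_shift_LR_iff:
  "(x, y) \<in> shift (LR a b) c d \<longleftrightarrow>
     y = d + 1 \<and> c + 1 \<le> x \<and> x \<le> c + b + 1 \<or> x = c + b + 1 \<and> d + 1 \<le> y \<and> y \<le> d + a + 1"
  unfolding mem_shift_iff LR_def by auto

lemma mem_shift_LR2_iff:
  "(x, y) \<in> shift (LR2 a b) c d \<longleftrightarrow>
     y = d + b + 1 \<and> c + 1 \<le> x \<and> x \<le> c + a + 1 \<or> x = c + a + 1 \<and> d + 1 \<le> y \<and> y \<le> d + b + 1"
  unfolding mem_shift_iff LR2_def by auto

lemma mem_shift_LR3_iff:
  "(x, y) \<in> shift (LR3 a b) c d \<longleftrightarrow>
     y = d + a + 1 \<and> c + 1 \<le> x \<and> x \<le> c + b + 1 \<or> x = c + 1 \<and> d + 1 \<le> y \<and> y \<le> d + a + 1"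
  unfolding mem_shift_iff LR3_def by auto

lemmas mem_shift_orientation_iffs =
  mem_shift_L_iff mem_shift_LR_iff mem_shift_LR2_iff mem_shift_LR3_iff

lemma mem_board_iff: "(x, y) \<in> board n \<longleftrightarrow> 1 \<le> x \<and> x \<le> n \<and> 1 \<le> y \<and> y \<le> n"
  unfolding board_def by auto

lemma finite_board: "finite (board n)"
proof -
  have "board n \<subseteq> {1..n} \<times> {1..n}"
    by (auto simp: mem_board_iff)
  then show ?thesis
    by (rule finite_subset) simp
qed

lemma free_copyI:
  "free_copy a b (shift (L a b) c d)" "free_copy a b (shift (LR a b) c d)"
  "free_copy a b (shift (LR2 a b) c d)" "free_copy a b (shift (LR3 a b) c d)"
  unfolding free_copy_def by blast+

lemma free_copy_nonempty:
  assumes "free_copy a b Q" "0 \<le> a" "0 \<le> b"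
  shows "Q \<noteq> {}"
proof -
  obtain c d where "Q = shift (L a b) c d \<or> Q = shift (LR a b) c d \<or>
      Q = shift (LR2 a b) c d \<or> Q = shift (LR3 a b) c d"
    using assms(1) unfolding free_copy_def by blast
  then have "(c + 1, d + 1) \<in> Q \<or> (c + a + 1, d + b + 1) \<in> Q"
    using assms(2,3) by (auto simp: mem_shift_orientation_iffs)
  then show ?thesis
    by blast
qed

definition half_turn :: "int \<Rightarrow> cell set \<Rightarrow> cell set" where
  "half_turn n Q = (\<lambda>(x, y). (n + 1 - x, n + 1 - y)) ` Q"

lemma mem_half_turn_iff: "(x, y) \<in> half_turn n Q \<longleftrightarrow> (n + 1 - x, n + 1 - y) \<in> Q"
  unfolding half_turn_def by force

lemma half_turn_half_turn [simp]: "half_turn n (half_turn n Q) = Q"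
  by (auto simp: mem_half_turn_iff)

lemma half_turn_subset_board: "Q \<subseteq> board n \<Longrightarrow> half_turn n Q \<subseteq> board n"
  by (auto simp: mem_half_turn_iff mem_board_iff)

lemma half_turn_disjoint: "P \<inter> Q = {} \<Longrightarrow> half_turn n P \<inter> half_turn n Q = {}"
  by (auto simp: mem_half_turn_iff)

lemma half_turn_shift_L:
  assumes "0 \<le> a" "0 \<le> b"
  shows "half_turn (a + b + 1) (shift (L a b) c d) = shift (LR2 a b) (b - c) (a - d)"
  using assms by (auto simp: mem_half_turn_iff mem_shift_orientation_iffs)

lemma half_turn_shift_LR:
  assumes "0 \<le> a" "0 \<le> b"
  shows "half_turn (a + b + 1) (shift (LR a b) c d) = shift (LR3 a b) (a - c) (b - d)"
  using assms by (auto simp: mem_half_turn_iff mem_shift_orientation_iffs)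

lemma shift_LR2_eq_half_turn:
  assumes "0 \<le> a" "0 \<le> b"
  shows "shift (LR2 a b) c d = half_turn (a + b + 1) (shift (L a b) (b - c) (a - d))"
  using half_turn_shift_L[OF assms, of "b - c" "a - d"] by simp

lemma shift_LR3_eq_half_turn:
  assumes "0 \<le> a" "0 \<le> b"
  shows "shift (LR3 a b) c d = half_turn (a + b + 1) (shift (LR a b) (a - c) (b - d))"
  using half_turn_shift_LR[OF assms, of "a - c" "b - d"] by simp

lemma free_copy_half_turn:
  assumes "0 \<le> a" "0 \<le> b" "free_copy a b Q"
  shows "free_copy a b (half_turn (a + b + 1) Q)"
proof -
  obtain c d where "Q = shift (L a b) c d \<or> Q = shift (LR a b) c d \<or>
      Q = shift (LR2 a b) c d \<or> Q = shift (LR3 a b) c d"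
    using assms(3) unfolding free_copy_def by blast
  then show ?thesis
  proof (elim disjE)
    assume "Q = shift (L a b) c d"
    then show ?thesis
      using free_copyI half_turn_shift_L[OF assms(1,2)] by simp
  next
    assume "Q = shift (LR a b) c d"
    then show ?thesis
      using free_copyI half_turn_shift_LR[OF assms(1,2)] by simp
  next
    assume "Q = shift (LR2 a b) c d"
    then show ?thesis
      using free_copyI shift_LR2_eq_half_turn[OF assms(1,2)] by simp
  next
    assume "Q = shift (LR3 a b) c d"
    then show ?thesis
      using free_copyI shift_LR3_eq_half_turn[OF assms(1,2)] by simp
  qed
qed

lemma shift_L_subset_board_iff:
  assumes "0 \<le> a" "0 < b"
  shows "shift (L a b) c d \<subseteq> board (a + b + 1) \<longleftrightarrow> 0 \<le> c \<and> c \<le> b \<and> 0 \<le> d \<and> d \<le> a"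
proof
  assume "shift (L a b) c d \<subseteq> board (a + b + 1)"
  moreover have "(c + 1, d + 1) \<in> shift (L a b) c d" "(c + a + 1, d + 1) \<in> shift (L a b) c d"
    "(c + 1, d + b + 1) \<in> shift (L a b) c d"
    using assms by (auto simp: mem_shift_L_iff)
  ultimately show "0 \<le> c \<and> c \<le> b \<and> 0 \<le> d \<and> d \<le> a"
    by (auto simp: mem_board_iff)
qed (force simp: mem_shift_L_iff mem_board_iff)

lemma shift_LR_subset_board_iff:
  assumes "0 \<le> a" "0 \<le> b"
  shows "shift (LR a b) c d \<subseteq> board (a + b + 1) \<longleftrightarrow> 0 \<le> c \<and> c \<le> a \<and> 0 \<le> d \<and> d \<le> b"
proof
  assume "shift (LR a b) c d \<subseteq> board (a + b + 1)"
  moreover have "(c + 1, d + 1) \<in> shift (LR a b) c d" "(c + b + 1, d + a + 1) \<in> shift (LR a b) c d"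
    using assms by (auto simp: mem_shift_LR_iff)
  ultimately show "0 \<le> c \<and> c \<le> a \<and> 0 \<le> d \<and> d \<le> b"
    by (auto simp: mem_board_iff)
qed (force simp: mem_shift_LR_iff mem_board_iff)

lemma shift_L_disjoint_diagonal: "shift (L a b) c d \<inter> shift (L a b) (c + 1) (d + 1) = {}"
  by (auto simp: mem_shift_L_iff)

lemma shift_LR_disjoint_antidiagonal: "shift (LR a b) c d \<inter> shift (LR a b) (c - 1) (d + 1) = {}"
  by (auto simp: mem_shift_LR_iff)

lemma disjoint_free_copy_of_shift_L:
  assumes "0 < a" "0 < b" "shift (L a b) c d \<subseteq> board (a + b + 1)"
  shows "\<exists>Q. free_copy a b Q \<and> Q \<subseteq> board (a + b + 1) \<and> shift (L a b) c d \<inter> Q = {}"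
proof -
  have bounds: "0 \<le> c" "c \<le> b" "0 \<le> d" "d \<le> a"
    using assms by (simp_all add: shift_L_subset_board_iff)
  consider "c < b" "d < a" | "1 \<le> c" "1 \<le> d" | "c = 0" "d = a" | "c = b" "d = 0"
    using bounds assms(1,2) by linarith
  then show ?thesis
  proof cases
    case 1
    then have "shift (L a b) (c + 1) (d + 1) \<subseteq> board (a + b + 1)"
      using assms(1,2) bounds by (simp add: shift_L_subset_board_iff)
    then show ?thesis
      using free_copyI(1) shift_L_disjoint_diagonal by blast
  next
    case 2
    then have "shift (L a b) (c - 1) (d - 1) \<subseteq> board (a + b + 1)"
      using assms(1,2) bounds by (simp add: shift_L_subset_board_iff)
    moreover have "shift (L a b) c d \<inter> shift (L a b) (c - 1) (d - 1) = {}"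
      using shift_L_disjoint_diagonal[of a b "c - 1" "d - 1"] by (simp add: inf_commute)
    ultimately show ?thesis
      using free_copyI(1) by blast
  next
    case 3
    have "shift (LR a b) a 0 \<subseteq> board (a + b + 1)"
      using assms(1,2) by (simp add: shift_LR_subset_board_iff)
    moreover have "shift (L a b) c d \<inter> shift (LR a b) a 0 = {}"
      using 3 assms(1,2) by (auto simp: mem_shift_L_iff mem_shift_LR_iff)
    ultimately show ?thesis
      using free_copyI(2) by blast
  next
    case 4
    have "shift (LR3 a b) 0 b \<subseteq> board (a + b + 1)"
      using assms(1,2) by (auto simp: mem_shift_LR3_iff mem_board_iff)
    moreover have "shift (L a b) c d \<inter> shift (LR3 a b) 0 b = {}"
      using 4 assms(1,2) by (auto simp: mem_shift_L_iff mem_shift_LR3_iff)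
    ultimately show ?thesis
      using free_copyI(4) by blast
  qed
qed

lemma disjoint_free_copy_of_shift_LR:
  assumes "0 < a" "0 < b" "shift (LR a b) c d \<subseteq> board (a + b + 1)"
  shows "\<exists>Q. free_copy a b Q \<and> Q \<subseteq> board (a + b + 1) \<and> shift (LR a b) c d \<inter> Q = {}"
proof -
  have bounds: "0 \<le> c" "c \<le> a" "0 \<le> d" "d \<le> b"
    using assms by (simp_all add: shift_LR_subset_board_iff)
  consider "1 \<le> c" "d < b" | "c < a" "1 \<le> d" | "c = 0" "d = 0" | "c = a" "d = b"
    using bounds assms(1,2) by linarith
  then show ?thesis
  proof cases
    case 1
    then have "shift (LR a b) (c - 1) (d + 1) \<subseteq> board (a + b + 1)"
      using assms(1,2) bounds by (simp add: shift_LR_subset_board_iff)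
    then show ?thesis
      using free_copyI(2) shift_LR_disjoint_antidiagonal by blast
  next
    case 2
    then have "shift (LR a b) (c + 1) (d - 1) \<subseteq> board (a + b + 1)"
      using assms(1,2) bounds by (simp add: shift_LR_subset_board_iff)
    moreover have "shift (LR a b) c d \<inter> shift (LR a b) (c + 1) (d - 1) = {}"
      using shift_LR_disjoint_antidiagonal[of a b "c + 1" "d - 1"] by (simp add: inf_commute)
    ultimately show ?thesis
      using free_copyI(2) by blast
  next
    case 3
    have "shift (LR2 a b) b a \<subseteq> board (a + b + 1)"
      using assms(1,2) by (auto simp: mem_shift_LR2_iff mem_board_iff)
    moreover have "shift (LR a b) c d \<inter> shift (LR2 a b) b a = {}"
      using 3 assms(1,2) by (auto simp: mem_shift_LR_iff mem_shift_LR2_iff)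
    ultimately show ?thesis
      using free_copyI(3) by blast
  next
    case 4
    have "shift (L a b) 0 0 \<subseteq> board (a + b + 1)"
      using assms(1,2) by (simp add: shift_L_subset_board_iff)
    moreover have "shift (LR a b) c d \<inter> shift (L a b) 0 0 = {}"
      using 4 assms(1,2) by (auto simp: mem_shift_L_iff mem_shift_LR_iff)
    ultimately show ?thesis
      using free_copyI(1) by blast
  qed
qed

lemma disjoint_free_copy_exists:
  assumes "0 < a" "0 < b" "free_copy a b P" "P \<subseteq> board (a + b + 1)"
  shows "\<exists>Q. free_copy a b Q \<and> Q \<subseteq> board (a + b + 1) \<and> P \<inter> Q = {}"
proof -
  let ?n = "a + b + 1"
  have base: "\<exists>Q. free_copy a b Q \<and> Q \<subseteq> board ?n \<and> P' \<inter> Q = {}"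
    if "P' \<subseteq> board ?n" "P' = shift (L a b) c d \<or> P' = shift (LR a b) c' d'" for P' c d c' d'
    using that disjoint_free_copy_of_shift_L[OF assms(1,2)] disjoint_free_copy_of_shift_LR[OF assms(1,2)]
    by (elim disjE) simp_all
  obtain c d where "P = shift (L a b) c d \<or> P = shift (LR a b) c d \<or>
      P = shift (LR2 a b) c d \<or> P = shift (LR3 a b) c d"
    using assms(3) unfolding free_copy_def by blast
  then consider (upright) "P = shift (L a b) c d \<or> P = shift (LR a b) c d"
    | (turned) "half_turn ?n P = shift (L a b) (b - c) (a - d) \<or>
        half_turn ?n P = shift (LR a b) (a - c) (b - d)"
    using assms(1,2)
    by (elim disjE) (simp_all add: shift_LR2_eq_half_turn shift_LR3_eq_half_turn)
  then show ?thesis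
  proof cases
    case upright
    then show ?thesis
      by (rule base[OF assms(4)])
  next
    case turned
    have "half_turn ?n P \<subseteq> board ?n"
      using assms(4) by (rule half_turn_subset_board)
    then obtain Q where Q: "free_copy a b Q" "Q \<subseteq> board ?n" "half_turn ?n P \<inter> Q = {}"
      using base[OF _ turned] by blast
    have "free_copy a b (half_turn ?n Q)"
      using assms(1,2) Q(1) by (simp add: free_copy_half_turn)
    moreover have "half_turn ?n Q \<subseteq> board ?n"
      using Q(2) by (rule half_turn_subset_board)
    moreover have "P \<inter> half_turn ?n Q = {}"
      using half_turn_disjoint[OF Q(3), of ?n] by simp
    ultimately show ?thesis
      by blast
  qed
qed

lemma free_packing_finite:
  assumes "free_packing a b S"
  shows "finite S"
proof -
  have "S \<subseteq> Pow (board (a + b + 1))"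
    using assms unfolding free_packing_def valid_arrangement_def by blast
  then show ?thesis
    by (rule finite_subset) (simp add: finite_board)
qed

lemma free_packing_exists: "\<exists>S. free_packing a b S"
proof -
  let ?A = "{S. (\<forall>Q\<in>S. free_copy a b Q) \<and> valid_arrangement (a + b + 1) S}"
  have "?A \<subseteq> Pow (Pow (board (a + b + 1)))"
    unfolding valid_arrangement_def by blast
  then have "finite ?A"
    by (rule finite_subset) (simp add: finite_board)
  moreover have "{} \<in> ?A"
    unfolding valid_arrangement_def by simp
  ultimately obtain S where S: "S \<in> ?A" and maximal: "\<forall>S'\<in>?A. S \<subseteq> S' \<longrightarrow> S = S'"
    using finite_has_maximal[of ?A] by blast
  have "free_packing a b S"
    unfolding free_packing_def
  proof (intro conjI allI impI notI)
    fix Q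
    assume Q: "free_copy a b Q \<and> Q \<notin> S" and "valid_arrangement (a + b + 1) (insert Q S)"
    then have "insert Q S \<in> ?A"
      using S by simp
    then have "S = insert Q S"
      using maximal by blast
    with Q show False
      by blast
  qed (use S in simp_all)
  then show ?thesis ..
qed

lemma valid_arrangement_insert:
  assumes "valid_arrangement n S" "Q \<subseteq> board n" "\<forall>P\<in>S. P \<inter> Q = {}"
  shows "valid_arrangement n (insert Q S)"
  using assms unfolding valid_arrangement_def by (simp add: inf_commute)

lemma free_packing_contains_disjoint_copy:
  assumes "free_packing a b S" "free_copy a b Q" "Q \<subseteq> board (a + b + 1)" "\<forall>P\<in>S. P \<inter> Q = {}"
  shows "Q \<in> S"
proof (rule ccontr)
  assume "Q \<notin> S"
  then have "\<not> valid_arrangement (a + b + 1) (insert Q S)"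
    using assms(1,2) unfolding free_packing_def by simp
  moreover have "valid_arrangement (a + b + 1) S"
    using assms(1) unfolding free_packing_def by simp
  ultimately show False
    using valid_arrangement_insert assms(3,4) by blast
qed

lemma free_packing_card_ge_2:
  assumes "0 < a" "0 < b" "free_packing a b S"
  shows "2 \<le> card S"
proof -
  have "S \<noteq> {}"
  proof
    assume "S = {}"
    moreover have "shift (L a b) 0 0 \<subseteq> board (a + b + 1)"
      using assms(1,2) by (simp add: shift_L_subset_board_iff)
    ultimately show False
      using free_packing_contains_disjoint_copy[OF assms(3) free_copyI(1)] by simp
  qed
  moreover have "S \<noteq> {P}" for P
  proof
    assume S: "S = {P}"
    then have "free_copy a b P" "P \<subseteq> board (a + b + 1)"
      using assms(3) unfolding free_packing_def valid_arrangement_def by simp_all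
    then obtain Q where Q: "free_copy a b Q" "Q \<subseteq> board (a + b + 1)" "P \<inter> Q = {}"
      using disjoint_free_copy_exists[OF assms(1,2)] by blast
    then have "Q = P"
      using free_packing_contains_disjoint_copy[OF assms(3)] S by simp
    then show False
      using Q(1,3) free_copy_nonempty assms(1,2) by simp
  qed
  moreover have "finite S"
    using assms(3) by (rule free_packing_finite)
  ultimately have "card S \<noteq> 0" "card S \<noteq> 1"
    by (simp_all add: card_1_singleton_iff)
  then show ?thesis
    by linarith
qed

theorem lemma1:
  fixes a b :: int
  assumes "0 < a" and "a \<le> b"
  shows "2 \<le> cp_free a b"
proof -
  obtain S where "free_packing a b S" "card S = cp_free a b"
    using LeastI_ex[of "\<lambda>k. \<exists>S. free_packing a b S \<and> card S = k"] free_packing_exists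
    unfolding cp_free_def by blast
  then show ?thesis
    using free_packing_card_ge_2[of a b S] assms by simp
qed

end
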